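(* For integers $q\ge1$, $a$, $n$ let $S(q,a,n)=\sum_{x=1}^q e\big(\frac{ax^2+nx}{q}\big)$, and for integers $n_1,n_2,n_3,m$ let $$T(q;n_1,n_2,n_3,m)=\sum_{\substack{a=1\\ (a,q)=1}}^q S(q,a,n_1)S(q,a,n_2)S(q,a,n_3)\,e\Big(\frac{\overline{a}\,m}{q}\Big),$$ where $\overline{a}$ is the inverse of $a$ modulo $q$. Then for every positive integer $r$ and all integers $n_1,n_2,n_3,m$, $$|T(2^r;n_1,n_2,n_3,m)|\le 2^{2+5r/2}.$$
   Context: $e(z)=e^{2\pi i z}$. *)

theory Defs
  imports "HOL-Analysis.Analysis" "HOL-Number_Theory.Cong"
begin

definition e :: "real \<Rightarrow> complex" where
  "e z = exp (2 * of_real pi * \<i> * of_real z)"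

definition S :: "int \<Rightarrow> int \<Rightarrow> int \<Rightarrow> complex" where
  "S q a n = (\<Sum>x = 1..q. e (of_int (a * x^2 + n * x) / of_int q))"

definition inv_mod :: "int \<Rightarrow> int \<Rightarrow> int" where
  "inv_mod q a = (THE b. b \<in> {0..<q} \<and> [a * b = 1] (mod q))"

definition T :: "int \<Rightarrow> int \<Rightarrow> int \<Rightarrow> int \<Rightarrow> int \<Rightarrow> complex" where
  "T q n1 n2 n3 m = (\<Sum>a \<in> {a \<in> {1..q}. coprime a q}.
      S q a n1 * S q a n2 * S q a n3 * e (of_int (inv_mod q a * m) / of_int q))"

end

theory Submission
  imports Defs
begin

text \<open>
  For coprime \<open>a\<close> and any \<open>q > 0\<close>, Weyl differencing writes \<open>|S(q,a,n)|\<^sup>2\<close> as a sum over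
  shifts \<open>h\<close> of complete linear sums in \<open>2ah\<close>; these vanish unless \<open>q | 2h\<close>, leaving at most
  two shifts, each contributing at most \<open>q\<close>. Hence \<open>|S| \<le> (2q)\<^sup>1\<^sup>/\<^sup>2\<close>, and bounding \<open>T\<close>
  termwise gives \<open>|T| \<le> q (2q)\<^sup>3\<^sup>/\<^sup>2\<close>, which for \<open>q = 2^r\<close> is \<open>2^((5r + 3)/2) \<le> 2^(2 + 5r/2)\<close>.
\<close>

lemma e_add: "e (x + y) = e x * e y"
  by (simp add: e_def ring_distribs exp_add)

lemma e_of_int: "e (of_int k) = 1"
proof -
  have "e (of_int k) = exp ((2 * complex_of_int k * pi) * \<i>)"
    unfolding e_def by (simp add: algebra_simps)
  also have "\<dots> = 1"
    using exp_integer_2pi[of "of_int k"] by (simp add: mult.assoc)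
  finally show ?thesis .
qed

lemma norm_e [simp]: "cmod (e x) = 1"
  by (simp add: e_def)

lemma cnj_e: "cnj (e x) = e (- x)"
  by (simp add: e_def exp_cnj)

lemma e_eq_1_imp_Ints: "e x = 1 \<Longrightarrow> x \<in> \<int>"
proof -
  assume "e x = 1"
  then obtain n :: int where "2 * pi * x = of_int (2 * n) * pi"
    unfolding e_def exp_eq_1 by auto
  then show "x \<in> \<int>" by simp
qed

definition e_frac :: "int \<Rightarrow> int \<Rightarrow> complex" where
  "e_frac q k = e (of_int k / of_int q)"

lemma e_frac_add: "e_frac q (k + l) = e_frac q k * e_frac q l"
  unfolding e_frac_def by (simp add: add_divide_distrib e_add)

lemma e_frac_mod:
  assumes "q > 0"
  shows "e_frac q (k mod q) = e_frac q k"
proof -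
  have "e_frac q k = e_frac q (q * (k div q)) * e_frac q (k mod q)"
    by (metis e_frac_add div_mult_mod_eq mult.commute)
  moreover have "e_frac q (q * (k div q)) = 1"
    unfolding e_frac_def using assms by (simp add: e_of_int)
  ultimately show ?thesis by simp
qed

lemma e_frac_cong:
  assumes "q > 0" "[k = l] (mod q)"
  shows "e_frac q k = e_frac q l"
  by (metis assms cong_def e_frac_mod)

lemma norm_e_frac [simp]: "cmod (e_frac q k) = 1"
  by (simp add: e_frac_def)

lemma cnj_e_frac: "cnj (e_frac q k) = e_frac q (- k)"
  by (simp add: e_frac_def cnj_e)

lemma e_frac_eq_1_imp_dvd:
  assumes "e_frac q k = 1" "q > 0"
  shows "q dvd k"
proof -
  obtain j :: int where "of_int k / of_int q = (of_int j :: real)"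
    using e_eq_1_imp_Ints assms(1) unfolding e_frac_def by (auto elim: Ints_cases)
  then have "k = j * q"
    using assms(2) by (simp add: field_simps) (metis of_int_eq_iff of_int_mult)
  then show ?thesis by simp
qed

lemma sum_periodic_shift:
  fixes f :: "int \<Rightarrow> 'a::comm_monoid_add"
  assumes q: "q > 0" and periodic: "\<And>x. f (x mod q) = f x"
  shows "(\<Sum>x\<in>{0..<q}. f (y + x)) = (\<Sum>x\<in>{0..<q}. f x)"
proof -
  have "(\<Sum>x\<in>{0..<q}. f (y + x)) = (\<Sum>x\<in>{0..<q}. f ((y + x) mod q))"
    by (simp add: periodic)
  also have "\<dots> = (\<Sum>x\<in>{0..<q}. f x)"
    by (rule sum.reindex_bij_witness[where i="\<lambda>x. (x - y) mod q" and j="\<lambda>x. (y + x) mod q"])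
       (use q in \<open>auto simp: mod_simps\<close>)
  finally show ?thesis .
qed

lemma sum_periodic_atLeast1_atMost:
  fixes f :: "int \<Rightarrow> 'a::comm_monoid_add"
  assumes q: "q > 0" and periodic: "\<And>x. f (x mod q) = f x"
  shows "(\<Sum>x=1..q. f x) = (\<Sum>x\<in>{0..<q}. f x)"
proof -
  have "{1..q} = insert q {1..<q}" "{0..<q} = insert 0 {1..<q}"
    using q by auto
  moreover have "f q = f 0"
    using periodic[of q] by simp
  ultimately show ?thesis by simp
qed

lemma sum_e_frac_linear_eq_0:
  assumes q: "q > 0" and "\<not> q dvd c"
  shows "(\<Sum>y\<in>{0..<q}. e_frac q (c * y)) = 0"
proof -
  have "e_frac q c \<noteq> 1"
    using assms e_frac_eq_1_imp_dvd by blast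
  let ?G = "\<Sum>y\<in>{0..<q}. e_frac q (c * y)"
  have "?G = (\<Sum>y\<in>{0..<q}. e_frac q (c * (1 + y)))"
    by (rule sum_periodic_shift[OF q, symmetric]) (rule e_frac_cong[OF q], simp add: cong_def mod_simps)
  also have "\<dots> = e_frac q c * ?G"
    by (simp add: distrib_left e_frac_add sum_distrib_left)
  finally have "(1 - e_frac q c) * ?G = 0"
    by (simp add: algebra_simps)
  with \<open>e_frac q c \<noteq> 1\<close> show ?thesis by simp
qed

lemma norm_sum_e_frac_le:
  assumes "q > 0"
  shows "cmod (\<Sum>y\<in>{0..<q}. e_frac q (f y)) \<le> of_int q"
proof -
  have "cmod (\<Sum>y\<in>{0..<q}. e_frac q (f y)) \<le> (\<Sum>y\<in>{0..<q}. cmod (e_frac q (f y)))"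
    by (rule norm_sum)
  with assms show ?thesis by simp
qed

lemma cong_quadratic_mod:
  "[a * (x mod q)^2 + n * (x mod q) = a * x^2 + n * (x::int)] (mod q)"
  by (intro cong_add cong_mult cong_pow cong_refl) simp_all

lemma S_eq_sum_residues:
  assumes q: "q > 0"
  shows "S q a n = (\<Sum>x\<in>{0..<q}. e_frac q (a * x^2 + n * x))"
  unfolding S_def e_frac_def[symmetric]
  by (rule sum_periodic_atLeast1_atMost[OF q], rule e_frac_cong[OF q], rule cong_quadratic_mod)

text \<open>Weyl differencing: substituting \<open>x = y + h\<close> in \<open>S \<cdot> cnj S\<close> makes the phase linear in \<open>y\<close>.\<close>

lemma S_mult_cnj_S:
  assumes q: "q > 0"
  shows "S q a n * cnj (S q a n) =
    (\<Sum>h\<in>{0..<q}. e_frac q (a * h^2 + n * h) * (\<Sum>y\<in>{0..<q}. e_frac q (2 * a * h * y)))"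
proof -
  define P where "P x = a * x^2 + n * x" for x
  have inner: "(\<Sum>x\<in>{0..<q}. e_frac q (P x - P y))
      = (\<Sum>h\<in>{0..<q}. e_frac q (P h) * e_frac q (2 * a * h * y))" for y
  proof -
    have "(\<Sum>x\<in>{0..<q}. e_frac q (P x - P y)) = (\<Sum>h\<in>{0..<q}. e_frac q (P (y + h) - P y))"
      unfolding P_def
      by (rule sum_periodic_shift[OF q, symmetric], rule e_frac_cong[OF q])
         (intro cong_diff cong_quadratic_mod cong_refl)
    also have "\<dots> = (\<Sum>h\<in>{0..<q}. e_frac q (P h) * e_frac q (2 * a * h * y))"
    proof (rule sum.cong[OF refl])
      fix h
      have "P (y + h) - P y = P h + 2 * a * h * y"
        unfolding P_def by (simp add: algebra_simps power2_eq_square)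
      then show "e_frac q (P (y + h) - P y) = e_frac q (P h) * e_frac q (2 * a * h * y)"
        by (simp add: e_frac_add)
    qed
    finally show ?thesis .
  qed
  have "S q a n * cnj (S q a n) = (\<Sum>x\<in>{0..<q}. \<Sum>y\<in>{0..<q}. e_frac q (P x) * e_frac q (- P y))"
    unfolding S_eq_sum_residues[OF q] P_def by (simp add: sum_product cnj_e_frac)
  also have "\<dots> = (\<Sum>y\<in>{0..<q}. \<Sum>x\<in>{0..<q}. e_frac q (P x - P y))"
    by (subst sum.swap) (simp add: e_frac_add[symmetric])
  also have "\<dots> = (\<Sum>h\<in>{0..<q}. e_frac q (P h) * (\<Sum>y\<in>{0..<q}. e_frac q (2 * a * h * y)))"
    by (simp add: inner sum_distrib_left) (rule sum.swap)
  finally show ?thesis unfolding P_def .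
qed

lemma card_half_periods_le_2:
  fixes a q :: int
  assumes q: "q > 0" and "coprime a q"
  shows "card {h\<in>{0..<q}. q dvd 2 * a * h} \<le> 2"
proof -
  have "{h\<in>{0..<q}. q dvd 2 * a * h} \<subseteq> {0, q div 2}"
  proof
    fix h assume "h \<in> {h\<in>{0..<q}. q dvd 2 * a * h}"
    then have h: "0 \<le> h" "h < q" "q dvd a * (2 * h)"
      by (auto simp: ac_simps)
    then have "q dvd 2 * h"
      using assms(2) by (metis coprime_commute coprime_dvd_mult_right_iff)
    then obtain k where k: "2 * h = q * k" by blast
    have "0 \<le> q * k" "q * k < q * 2"
      using k h by linarith+
    then have "0 \<le> k" "k < 2"
      using q by (simp_all add: zero_le_mult_iff mult_less_cancel_left_pos)
    then have "k = 0 \<or> k = 1" by auto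
    with k show "h \<in> {0, q div 2}" by auto
  qed
  then have "card {h\<in>{0..<q}. q dvd 2 * a * h} \<le> card {0, q div 2}"
    by (rule card_mono[rotated]) simp
  also have "\<dots> \<le> 2"
    by (simp add: card_insert_if)
  finally show ?thesis .
qed

lemma norm_S_squared_le:
  assumes q: "q > 0" and "coprime a q"
  shows "(cmod (S q a n))^2 \<le> 2 * of_int q"
proof -
  define G where "G h = (\<Sum>y\<in>{0..<q}. e_frac q (2 * a * h * y))" for h
  define A where "A = {h\<in>{0..<q}. q dvd 2 * a * h}"
  have G_vanishes: "G h = 0" if "h \<in> {0..<q} - A" for h
    using that unfolding G_def A_def by (intro sum_e_frac_linear_eq_0[OF q]) auto
  have "(cmod (S q a n))^2 = cmod (S q a n * cnj (S q a n))"
    by (simp add: norm_mult power2_eq_square)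
  also have "\<dots> \<le> (\<Sum>h\<in>{0..<q}. cmod (e_frac q (a * h^2 + n * h) * G h))"
    unfolding S_mult_cnj_S[OF q] G_def by (rule norm_sum)
  also have "\<dots> = (\<Sum>h\<in>{0..<q}. cmod (G h))"
    by (simp add: norm_mult)
  also have "\<dots> = (\<Sum>h\<in>A. cmod (G h))"
    using G_vanishes by (intro sum.mono_neutral_right) (auto simp: A_def)
  also have "\<dots> \<le> (\<Sum>h\<in>A. of_int q)"
    by (rule sum_mono) (simp add: G_def norm_sum_e_frac_le[OF q])
  also have "\<dots> = real (card A) * of_int q"
    by simp
  also have "\<dots> \<le> 2 * of_int q"
    using card_half_periods_le_2[OF assms] q unfolding A_def by (intro mult_right_mono) auto
  finally show ?thesis .
qed

lemma norm_S_le: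
  assumes "q > 0" "coprime a q"
  shows "cmod (S q a n) \<le> sqrt (2 * of_int q)"
  using norm_S_squared_le[OF assms] by (simp add: real_le_rsqrt)

lemma norm_T_le:
  assumes q: "q > 0"
  shows "cmod (T q n1 n2 n3 m) \<le> of_int q * sqrt (2 * of_int q) ^ 3"
proof -
  define B where "B = sqrt (2 * real_of_int q)"
  define C where "C = {a \<in> {1..q}. coprime a q}"
  have "cmod (T q n1 n2 n3 m) \<le> (\<Sum>a\<in>C. cmod (S q a n1) * cmod (S q a n2) * cmod (S q a n3))"
    unfolding T_def C_def[symmetric] by (rule order_trans[OF norm_sum]) (simp add: norm_mult)
  also have "\<dots> \<le> (\<Sum>a\<in>C. B ^ 3)"
  proof (rule sum_mono)
    fix a assume "a \<in> C"
    then have "coprime a q" unfolding C_def by simp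
    then show "cmod (S q a n1) * cmod (S q a n2) * cmod (S q a n3) \<le> B ^ 3"
      using norm_S_le[OF q] q unfolding B_def power3_eq_cube by (intro mult_mono) auto
  qed
  also have "\<dots> \<le> of_int q * B ^ 3"
  proof -
    have "card C \<le> card {1..q}"
      unfolding C_def by (rule card_mono) auto
    with q have "real (card C) \<le> of_int q" by simp
    then show ?thesis unfolding B_def by (simp add: mult_right_mono)
  qed
  finally show ?thesis unfolding B_def .
qed

theorem lemma3p6:
  fixes r :: nat and n1 n2 n3 m :: int
  assumes "r \<ge> 1"
  shows "cmod (T (2^r) n1 n2 n3 m) \<le> 2 powr (2 + 5 * real r / 2)"
proof -
  have q: "real_of_int (2 ^ r) = 2 powr real r"
    by (simp add: powr_realpow)
  have "2 * real_of_int (2 ^ r) = 2 powr (real r + 1)"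
    unfolding q by (simp add: powr_add)
  then have "sqrt (2 * real_of_int (2 ^ r)) = 2 powr ((real r + 1) / 2)"
    by (simp add: powr_half_sqrt[symmetric] powr_powr)
  then have "real_of_int (2 ^ r) * sqrt (2 * real_of_int (2 ^ r)) ^ 3 = 2 powr ((5 * real r + 3) / 2)"
    unfolding q by (simp add: powr_realpow[symmetric] powr_powr powr_add[symmetric] field_simps)
  also have "\<dots> \<le> 2 powr (2 + 5 * real r / 2)"
    by (rule powr_mono) auto
  finally show ?thesis
    using norm_T_le[of "2 ^ r" n1 n2 n3 m] by simp
qed

end
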